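(* Let $G$ be a finite simple graph that contains no induced subgraph isomorphic to a banner or to $C_5$. Suppose $G$ contains an odd antihole $A$ (as an induced subgraph) such that (i) $\alpha(G) \geq 3$, and (ii) no co-triangle of $G$ contains two vertices of $A$. Then the complement $\overline{G}$ of $G$ has a connected component $O$ that contains all vertices of $A$ and is triangle-free.
   Context: A hole is a chordless (induced) cycle with at least four vertices; it is odd if it has an odd number of vertices. An antihole is the complement of a hole; an odd antihole is the complement of an odd hole. $C_k$ denotes the chordless cycle on $k$ vertices. A banner is the graph consisting of a hole on four vertices together with one additional vertex adjacent to exactly one vertex of that hole. A co-triangle is a set of three pairwise non-adjacent vertices (the complement of a triangle). $\alpha(G)$ denotes the maximum size of a stable set of $G$. "Contains" means contains as an induced subgraph. *)

theory Defs
  imports Main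
begin

definition simple_graph :: "'a set \<Rightarrow> ('a \<Rightarrow> 'a \<Rightarrow> bool) \<Rightarrow> bool" where
  "simple_graph V E \<longleftrightarrow> finite V \<and> (\<forall>x y. E x y \<longrightarrow> x \<in> V \<and> y \<in> V \<and> x \<noteq> y \<and> E y x)"

definition compl_adj :: "'a set \<Rightarrow> ('a \<Rightarrow> 'a \<Rightarrow> bool) \<Rightarrow> 'a \<Rightarrow> 'a \<Rightarrow> bool" where
  "compl_adj V E x y \<longleftrightarrow> x \<in> V \<and> y \<in> V \<and> x \<noteq> y \<and> \<not> E x y"

definition induced_iso :: "('a \<Rightarrow> 'a \<Rightarrow> bool) \<Rightarrow> 'a set \<Rightarrow> 'b set \<Rightarrow> ('b \<Rightarrow> 'b \<Rightarrow> bool) \<Rightarrow> bool" where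
  "induced_iso E A VH EH \<longleftrightarrow>
     (\<exists>f. bij_betw f VH A \<and> (\<forall>x\<in>VH. \<forall>y\<in>VH. E (f x) (f y) \<longleftrightarrow> EH x y))"

definition contains_induced :: "'a set \<Rightarrow> ('a \<Rightarrow> 'a \<Rightarrow> bool) \<Rightarrow> 'b set \<Rightarrow> ('b \<Rightarrow> 'b \<Rightarrow> bool) \<Rightarrow> bool" where
  "contains_induced V E VH EH \<longleftrightarrow> (\<exists>A \<subseteq> V. induced_iso E A VH EH)"

definition cycle_adj :: "nat \<Rightarrow> nat \<Rightarrow> nat \<Rightarrow> bool" where
  "cycle_adj k i j \<longleftrightarrow> i < k \<and> j < k \<and> i \<noteq> j \<and> (j = (i + 1) mod k \<or> i = (j + 1) mod k)"

definition anticycle_adj :: "nat \<Rightarrow> nat \<Rightarrow> nat \<Rightarrow> bool" where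
  "anticycle_adj k i j \<longleftrightarrow> i < k \<and> j < k \<and> i \<noteq> j \<and> \<not> cycle_adj k i j"

definition banner_adj :: "nat \<Rightarrow> nat \<Rightarrow> bool" where
  "banner_adj i j \<longleftrightarrow> {i, j} \<in> {{0,1}, {1,2}, {2,3}, {3,0}, {0,4}}"

definition banner_V :: "nat set" where "banner_V = {0..<5}"

definition odd_antihole :: "'a set \<Rightarrow> ('a \<Rightarrow> 'a \<Rightarrow> bool) \<Rightarrow> 'a set \<Rightarrow> bool" where
  "odd_antihole V E A \<longleftrightarrow> A \<subseteq> V \<and>
     (\<exists>k. odd k \<and> k \<ge> 5 \<and> induced_iso E A {0..<k} (anticycle_adj k))"

definition stable_set :: "'a set \<Rightarrow> ('a \<Rightarrow> 'a \<Rightarrow> bool) \<Rightarrow> 'a set \<Rightarrow> bool" where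
  "stable_set V E S \<longleftrightarrow> S \<subseteq> V \<and> (\<forall>x\<in>S. \<forall>y\<in>S. \<not> E x y)"

definition co_triangle :: "'a set \<Rightarrow> ('a \<Rightarrow> 'a \<Rightarrow> bool) \<Rightarrow> 'a set \<Rightarrow> bool" where
  "co_triangle V E S \<longleftrightarrow> stable_set V E S \<and> card S = 3"

definition stability_number :: "'a set \<Rightarrow> ('a \<Rightarrow> 'a \<Rightarrow> bool) \<Rightarrow> nat" where
  "stability_number V E = Max {card S | S. stable_set V E S}"

definition conn_component :: "'a set \<Rightarrow> ('a \<Rightarrow> 'a \<Rightarrow> bool) \<Rightarrow> 'a set \<Rightarrow> bool" where
  "conn_component V R C \<longleftrightarrow> (\<exists>x\<in>V. C = {y \<in> V. (\<lambda>u v. R u v \<and> u \<in> V \<and> v \<in> V)\<^sup>*\<^sup>* x y})"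

definition triangle_free_on :: "('a \<Rightarrow> 'a \<Rightarrow> bool) \<Rightarrow> 'a set \<Rightarrow> bool" where
  "triangle_free_on R C \<longleftrightarrow> \<not> (\<exists>x\<in>C. \<exists>y\<in>C. \<exists>z\<in>C. R x y \<and> R y z \<and> R x z)"

end

theory Submission
  imports Defs
begin

text \<open>Work in the complement \<open>F\<close> of \<open>G\<close>. There \<open>A\<close> is an odd hole
  \<open>h\<^sub>0 \<dots> h\<^sub>k\<^sub>-\<^sub>1\<close>, \<open>F\<close> contains neither a co-banner (a triangle with a pendant path of
  length two) nor a \<open>C\<^sub>5\<close>, and by (ii) no triangle of \<open>F\<close> has two vertices in \<open>A\<close>.
  If \<open>h\<^sub>i\<close> lay in a triangle \<open>h\<^sub>i x y\<close>, excluding these two configurations would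
  force \<open>h\<^sub>i\<^sub>+\<^sub>2\<close> to be adjacent to \<open>x\<close> and \<open>y\<close> as well; walking around the odd hole in
  steps of two then puts \<open>h\<^sub>i\<^sub>-\<^sub>1\<close> and \<open>h\<^sub>i\<close> into a common triangle. In the same way a
  hole vertex adjacent to a triangle vertex forces the hole to alternate between two vertices of
  the triangle, which again contradicts oddness. Finally, a shortest path of length at least two
  from a triangle to \<open>A\<close> would create a co-banner.\<close>

lemma compl_adj_sym: "simple_graph V E \<Longrightarrow> compl_adj V E u v \<Longrightarrow> compl_adj V E v u"
  unfolding simple_graph_def compl_adj_def by blast

lemma contains_induced_of_list:
  assumes sg: "simple_graph V E" and xs: "distinct xs" "set xs \<subseteq> V"
    and irrefl: "\<And>i. \<not> EH i i"
    and adj: "\<forall>i < length xs. \<forall>j < length xs. i \<noteq> j \<longrightarrow>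
                (compl_adj V E (xs ! i) (xs ! j) \<longleftrightarrow> \<not> EH i j)"
  shows "contains_induced V E {0..<length xs} EH"
proof -
  have "E (xs ! i) (xs ! j) \<longleftrightarrow> EH i j" if "i < length xs" "j < length xs" for i j
  proof (cases "i = j")
    case True
    then show ?thesis using sg irrefl unfolding simple_graph_def by blast
  next
    case False
    then have "xs ! i \<noteq> xs ! j" using xs(1) that by (simp add: nth_eq_iff_index_eq)
    moreover have "xs ! i \<in> V" "xs ! j \<in> V" using xs(2) that by auto
    ultimately show ?thesis using adj[rule_format, OF that False] unfolding compl_adj_def by simp
  qed
  then have "induced_iso E (set xs) {0..<length xs} EH"
    unfolding induced_iso_def
    by (intro exI[of _ "(!) xs"] conjI bij_betw_nth[OF xs(1)]) auto
  then show ?thesis unfolding contains_induced_def using xs(2) by blast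
qed


text \<open>The complement of a banner is a triangle \<open>t x y\<close> with a pendant path \<open>t a b\<close>.
  No distinctness hypotheses are needed: the adjacencies already force them.\<close>

lemma no_compl_cobanner:
  assumes sg: "simple_graph V E" and no_banner: "\<not> contains_induced V E banner_V banner_adj"
    and triangle: "compl_adj V E t x" "compl_adj V E t y" "compl_adj V E x y"
    and a: "compl_adj V E t a" "\<not> compl_adj V E a x" "\<not> compl_adj V E a y"
    and b: "compl_adj V E a b" "\<not> compl_adj V E b t" "\<not> compl_adj V E b x" "\<not> compl_adj V E b y"
  shows False
proof -
  let ?F = "compl_adj V E"
  have sym: "?F u v \<longleftrightarrow> ?F v u" for u v using compl_adj_sym[OF sg] by blast
  have xs: "distinct [b, x, a, y, t]" "set [b, x, a, y, t] \<subseteq> V"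
    using triangle a b sym unfolding compl_adj_def by auto
  have "contains_induced V E {0..<length [b, x, a, y, t]} banner_adj"
  proof (rule contains_induced_of_list[OF sg xs])
    show "\<not> banner_adj i i" for i by (auto simp: banner_adj_def doubleton_eq_iff)
    show "\<forall>i < length [b, x, a, y, t]. \<forall>j < length [b, x, a, y, t]. i \<noteq> j \<longrightarrow>
      (?F ([b, x, a, y, t] ! i) ([b, x, a, y, t] ! j) \<longleftrightarrow> \<not> banner_adj i j)"
      using triangle a b sym by (simp add: All_less_Suc banner_adj_def doubleton_eq_iff)
  qed
  then show False using no_banner by (simp add: banner_V_def numeral_eq_Suc)
qed

text \<open>The complement of the 5-cycle \<open>v0 v1 v2 v3 v4\<close> is the 5-cycle \<open>v0 v2 v4 v1 v3\<close>.\<close>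

lemma no_compl_C5:
  assumes sg: "simple_graph V E" and no_C5: "\<not> contains_induced V E {0..<5} (cycle_adj 5)"
    and cycle: "compl_adj V E v0 v1" "compl_adj V E v1 v2" "compl_adj V E v2 v3"
      "compl_adj V E v3 v4" "compl_adj V E v4 v0"
    and chords: "\<not> compl_adj V E v0 v2" "\<not> compl_adj V E v0 v3" "\<not> compl_adj V E v1 v3"
      "\<not> compl_adj V E v1 v4" "\<not> compl_adj V E v2 v4"
  shows False
proof -
  let ?F = "compl_adj V E"
  have sym: "?F u v \<longleftrightarrow> ?F v u" for u v using compl_adj_sym[OF sg] by blast
  have xs: "distinct [v0, v2, v4, v1, v3]" "set [v0, v2, v4, v1, v3] \<subseteq> V"
    using cycle chords sym unfolding compl_adj_def by auto
  have "contains_induced V E {0..<length [v0, v2, v4, v1, v3]} (cycle_adj 5)"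
  proof (rule contains_induced_of_list[OF sg xs])
    show "\<not> cycle_adj 5 i i" for i by (simp add: cycle_adj_def)
    show "\<forall>i < length [v0, v2, v4, v1, v3]. \<forall>j < length [v0, v2, v4, v1, v3]. i \<noteq> j \<longrightarrow>
      (?F ([v0, v2, v4, v1, v3] ! i) ([v0, v2, v4, v1, v3] ! j) \<longleftrightarrow> \<not> cycle_adj 5 i j)"
      using cycle chords sym by (simp add: All_less_Suc cycle_adj_def)
  qed
  then show False using no_C5 by (simp add: numeral_eq_Suc)
qed

lemma mod_add_neq:
  fixes i d k :: nat
  assumes "0 < d" "d < k"
  shows "(i + d) mod k \<noteq> i mod k"
proof
  assume "(i + d) mod k = i mod k"
  then have "k dvd d" by (metis add_diff_cancel_left' mod_eq_dvd_iff_nat le_add1)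
  then show False using assms by (simp add: nat_dvd_not_less)
qed

lemma cycle_adj_mod_Suc:
  assumes "2 < k"
  shows "cycle_adj k (i mod k) ((i + 1) mod k)"
  using assms mod_add_neq[of 1 k i] unfolding cycle_adj_def by (simp add: mod_simps)

lemma not_cycle_adj_mod:
  assumes "2 \<le> d" "d + 2 \<le> k"
  shows "\<not> cycle_adj k (i mod k) ((i + d) mod k)"
proof -
  have "(i + 1 + (d - 1)) mod k \<noteq> (i + 1) mod k" using assms by (intro mod_add_neq) auto
  moreover have "(i + (d + 1)) mod k \<noteq> i mod k" using assms by (intro mod_add_neq) auto
  ultimately show ?thesis using assms unfolding cycle_adj_def by (auto simp: mod_simps)
qed

lemma odd_antihole_complement_hole:
  assumes "odd_antihole V E A"
  obtains k :: nat and h :: "nat \<Rightarrow> 'a" where "odd k" "range h = A" "\<And>i. compl_adj V E (h i) (h (i + 1))"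
    "\<And>i. h (i + k) = h i" "\<And>i. \<not> compl_adj V E (h i) (h (i + 2))"
    "\<And>i. \<not> compl_adj V E (h i) (h (i + 3))"
proof -
  obtain k f where AV: "A \<subseteq> V" and k: "odd k" "5 \<le> k" and bij: "bij_betw f {0..<k} A"
    and iso: "\<forall>x\<in>{0..<k}. \<forall>y\<in>{0..<k}. E (f x) (f y) \<longleftrightarrow> anticycle_adj k x y"
    using assms unfolding odd_antihole_def induced_iso_def by blast
  define h where "h i = f (i mod k)" for i
  have mod_in: "i mod k \<in> {0..<k}" for i using k by simp
  have "range (\<lambda>i. i mod k) = {0..<k}"
    using mod_in by (auto simp: image_iff) (metis mod_less)
  then have "range h = f ` {0..<k}" unfolding h_def by (metis image_image)
  then have range: "range h = A" using bij by (simp add: bij_betw_def)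
  have h_adj: "compl_adj V E (h i) (h j) \<longleftrightarrow> cycle_adj k (i mod k) (j mod k)" for i j
  proof -
    have "h i = h j \<longleftrightarrow> i mod k = j mod k"
      unfolding h_def using bij_betw_imp_inj_on[OF bij] mod_in by (auto dest: inj_onD)
    moreover have "h i \<in> V" "h j \<in> V" using range AV by auto
    moreover have "E (h i) (h j) \<longleftrightarrow> anticycle_adj k (i mod k) (j mod k)"
      unfolding h_def using iso mod_in by blast
    ultimately show ?thesis
      unfolding compl_adj_def anticycle_adj_def using mod_in by (auto simp: cycle_adj_def)
  qed
  show thesis
  proof
    show "odd k" by (fact k(1))
    show "range h = A" by (fact range)
    show "compl_adj V E (h i) (h (i + 1))" for i
      using h_adj cycle_adj_mod_Suc[of k i] k by simp
    show "h (i + k) = h i" for i by (simp add: h_def)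
    show "\<not> compl_adj V E (h i) (h (i + 2))" "\<not> compl_adj V E (h i) (h (i + 3))" for i
      using h_adj not_cycle_adj_mod[of 2 k i] not_cycle_adj_mod[of 3 k i] k by simp_all
  qed
qed

locale hole_in_complement =
  fixes V :: "'a set" and E :: "'a \<Rightarrow> 'a \<Rightarrow> bool" and A :: "'a set"
    and k :: nat and h :: "nat \<Rightarrow> 'a"
  assumes simple: "simple_graph V E"
    and banner_free: "\<not> contains_induced V E banner_V banner_adj"
    and C5_free: "\<not> contains_induced V E {0..<5} (cycle_adj 5)"
    and co_triangle_meets_A: "\<forall>S. co_triangle V E S \<longrightarrow> card (S \<inter> A) < 2"
    and odd_length: "odd k"
    and hole_range: "range h = A"
    and hole_step: "compl_adj V E (h i) (h (i + 1))"
    and hole_period: "h (i + k) = h i"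
    and hole_no_chord2: "\<not> compl_adj V E (h i) (h (i + 2))"
    and hole_no_chord3: "\<not> compl_adj V E (h i) (h (i + 3))"
begin

abbreviation F :: "'a \<Rightarrow> 'a \<Rightarrow> bool" where "F \<equiv> compl_adj V E"

lemma F_sym: "F u v \<Longrightarrow> F v u"
  using compl_adj_sym[OF simple] .

lemma hole_in_A: "h i \<in> A"
  using hole_range by blast

lemma hole_segment:
  "F (h (i + 1)) (h (i + 2))" "F (h (i + 2)) (h (i + 3))" "\<not> F (h (i + 1)) (h (i + 3))"
  using hole_step[of "i + 1"] hole_step[of "i + 2"] hole_no_chord2[of "i + 1"]
  by (simp_all add: numeral_eq_Suc)

lemma hole_wraps: "h (i + 2 * (k div 2) + 1) = h i"
proof -
  have "2 * (k div 2) + 1 = k" using odd_length by presburger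
  then show ?thesis using hole_period by (metis add.assoc)
qed

lemmas no_cobanner = no_compl_cobanner[OF simple banner_free]

lemmas no_C5 = no_compl_C5[OF simple C5_free]

lemma no_triangle_through_two_of_A:
  assumes "F p q" "F q r" "F p r" "p \<in> A" "q \<in> A"
  shows False
proof -
  have "stable_set V E {p, q, r}"
    unfolding stable_set_def
  proof (intro conjI ballI)
    show "{p, q, r} \<subseteq> V" using assms(1,2) unfolding compl_adj_def by auto
    fix u v assume "u \<in> {p, q, r}" "v \<in> {p, q, r}"
    then have "u = v \<or> F u v" using assms(1-3) F_sym by auto
    then show "\<not> E u v" using simple unfolding simple_graph_def compl_adj_def by blast
  qed
  moreover have "card {p, q, r} = 3" using assms(1-3) unfolding compl_adj_def by auto
  ultimately have "co_triangle V E {p, q, r}" unfolding co_triangle_def ..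
  then have "card ({p, q, r} \<inter> A) < 2" using co_triangle_meets_A by blast
  moreover have "{p, q} \<subseteq> {p, q, r} \<inter> A" "card {p, q} = 2"
    using assms unfolding compl_adj_def by auto
  ultimately show False using card_mono[of "{p, q, r} \<inter> A" "{p, q}"] by auto
qed

lemma hole_no_chord_back: "\<not> F (h (i + 2)) (h i)" "\<not> F (h (i + 3)) (h i)"
  using hole_no_chord2 hole_no_chord3 F_sym by blast+

lemma hole_triangle_shift:
  assumes triangle: "F (h i) x" "F (h i) y" "F x y"
  shows "F (h (i + 2)) x \<and> F (h (i + 2)) y"
proof -
  have next_not_adj: "\<not> F (h (i + 1)) v" if "F (h i) v" for v
    using no_triangle_through_two_of_A[OF hole_step _ that hole_in_A hole_in_A] by blast
  have shift_both: "F (h (i + 2)) w" if vw: "F (h i) v" "F (h i) w" "F v w" and v: "F (h (i + 2)) v"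
    for v w
  proof (rule ccontr)
    assume w: "\<not> F (h (i + 2)) w"
    have "\<not> F (h (i + 3)) v"
      using no_triangle_through_two_of_A[OF hole_segment(2) _ v hole_in_A hole_in_A] by blast
    then have "F (h (i + 3)) w"
      using no_cobanner[OF F_sym[OF vw(1)] vw(3) vw(2) F_sym[OF v] hole_no_chord_back(1) w
          hole_segment(2)] hole_no_chord_back(2) by blast
    then show False
      by (rule no_C5[OF hole_segment(1,2) _ F_sym[OF vw(2)] hole_step hole_segment(3)
          next_not_adj[OF vw(2)] w hole_no_chord_back])
  qed
  have "F (h (i + 2)) x \<or> F (h (i + 2)) y"
    using no_cobanner[OF triangle hole_step next_not_adj[OF triangle(1)] next_not_adj[OF triangle(2)]
        hole_segment(1) hole_no_chord_back(1)] by blast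
  then show ?thesis using shift_both triangle F_sym by blast
qed

lemma hole_not_in_triangle:
  assumes triangle: "F (h i) x" "F (h i) y" "F x y"
  shows False
proof -
  have "F (h (i + 2 * m)) x \<and> F (h (i + 2 * m)) y" for m
  proof (induction m)
    case (Suc m)
    have "i + 2 * Suc m = i + 2 * m + 2" by simp
    with Suc show ?case using hole_triangle_shift[OF _ _ triangle(3)] by simp
  qed (simp add: triangle)
  then have "F (h (i + 2 * (k div 2))) x" by blast
  moreover have "F (h (i + 2 * (k div 2))) (h i)"
    using hole_step[of "i + 2 * (k div 2)"] unfolding hole_wraps .
  ultimately show False
    using no_triangle_through_two_of_A[OF _ triangle(1) _ hole_in_A hole_in_A] by blast
qed

lemma A_not_in_triangle:
  assumes "F u v" "F u w" "F v w" "u \<in> A"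
  shows False
proof -
  obtain i where "u = h i" using assms(4) hole_range by blast
  then show False using hole_not_in_triangle assms(1-3) by blast
qed

lemma hole_alternates_on_triangle:
  assumes triangle: "F t w" "F t z" "F w z" and at_t: "F (h i) t" and at_w: "F (h (i + 1)) w"
  shows "F (h (i + 2)) t"
proof -
  have Ts: "F w t" "F z t" "F z w" using triangle F_sym by blast+
  have not_at_z: "\<not> F (h i) z" "\<not> F (h (i + 1)) t" "\<not> F (h (i + 1)) z"
    using A_not_in_triangle hole_in_A triangle Ts at_t at_w by metis+
  have not_w: "\<not> F (h (i + 2)) w"
    using no_triangle_through_two_of_A[OF hole_segment(1) _ at_w] hole_in_A by blast
  have "F (h (i + 2)) t \<or> F (h (i + 2)) z"
    using no_cobanner[OF Ts(1) triangle(3) triangle(2) F_sym[OF at_w] not_at_z(2,3)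
        hole_segment(1) not_w] by blast
  moreover have "\<not> (F (h (i + 2)) t \<and> F (h (i + 2)) z)"
    using A_not_in_triangle triangle(2) hole_in_A by blast
  moreover have "\<not> (F (h (i + 2)) z \<and> \<not> F (h (i + 2)) t)"
    using no_C5[OF hole_step hole_segment(1) _ Ts(2) F_sym[OF at_t] hole_no_chord2 not_at_z(1)
        not_at_z(3) not_at_z(2)] by blast
  ultimately show ?thesis by blast
qed

lemma hole_not_alternating_on_triangle:
  assumes triangle: "F t w" "F t z" "F w z" and at_t: "F (h i) t" and at_w: "F (h (i + 1)) w"
  shows False
proof -
  have "F (h (i + 2 * m)) t \<and> F (h (i + 2 * m + 1)) w" for m
  proof (induction m)
    case (Suc m)
    let ?j = "i + 2 * m"
    have "F (h (?j + 2)) t" using hole_alternates_on_triangle[OF triangle] Suc by blast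
    then have "F (h (?j + 1 + 2)) w"
      using hole_alternates_on_triangle[OF F_sym[OF triangle(1)] triangle(3,2)] Suc
      by (simp add: add.assoc)
    then show ?case using \<open>F (h (?j + 2)) t\<close> by (simp add: add.assoc)
  qed (use at_t at_w in simp)
  then have "F (h i) w" using hole_wraps by metis
  then show False using A_not_in_triangle[OF at_t _ triangle(1)] hole_in_A by blast
qed

lemma triangle_not_adjacent_to_A:
  assumes triangle: "F t x" "F t y" "F x y" and "F t a" "a \<in> A"
  shows False
proof -
  obtain i where at_t: "F (h i) t" using assms(4,5) hole_range F_sym by blast
  have "\<not> F (h i) x" "\<not> F (h i) y" "\<not> F (h (i + 1)) t"
    using A_not_in_triangle at_t triangle hole_step hole_in_A by blast+
  then have "F (h (i + 1)) x \<or> F (h (i + 1)) y"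
    using no_cobanner[OF triangle F_sym[OF at_t] _ _ hole_step] by blast
  then show False
    using hole_not_alternating_on_triangle at_t triangle F_sym by blast
qed

lemma triangle_far_from_A:
  assumes "F t x" "F t y" "F x y" "a \<in> A"
  shows "\<not> (F ^^ n) t a"
  using assms(1-3)
proof (induction n arbitrary: t x y rule: less_induct)
  case (less n)
  note triangle = less.prems
  consider "n = 0" | "n = 1" | m where "n = Suc (Suc m)"
    by (metis One_nat_def not0_implies_Suc)
  then show ?case
  proof cases
    case 1
    then show ?thesis using A_not_in_triangle[OF triangle] assms(4) by auto
  next
    case 2
    then show ?thesis using triangle_not_adjacent_to_A[OF triangle _ assms(4)] by auto
  next
    case 3
    have closer: "\<not> (F ^^ Suc m) u a" if "F u v" "F u w" "F v w" for u v w
      using less.IH[of "Suc m"] 3 that by blast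
    show ?thesis
    proof
      assume "(F ^^ n) t a"
      then obtain t1 t2 where t1: "F t t1" "(F ^^ Suc m) t1 a" and t2: "F t1 t2" "(F ^^ m) t2 a"
        unfolding 3 by (metis relpowp_Suc_D2)
      have t1_far: "\<not> F t1 v" if "F t v" for v
        using closer[OF F_sym[OF t1(1)] _ that] t1(2) by blast
      have t2_far: "\<not> F t2 u" if "F u v" "F u w" "F v w" for u v w
        using closer[OF that] F_sym relpowp_Suc_I2 t2(2) by metis
      have triangle': "F x t" "F x y" "F t y" "F y t" "F y x" "F t x"
        using triangle F_sym by blast+
      show False
        using no_cobanner[OF triangle t1(1) t1_far[OF triangle(1)] t1_far[OF triangle(2)] t2(1)
            t2_far[OF triangle] t2_far[OF triangle'(1-3)] t2_far[OF triangle'(4-6)]] .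
    qed
  qed
qed

lemma component_of_A:
  "\<exists>C. conn_component V F C \<and> A \<subseteq> C \<and> triangle_free_on F C"
proof -
  define C where "C = {y \<in> V. F\<^sup>*\<^sup>* (h 0) y}"
  have "(\<lambda>u v. F u v \<and> u \<in> V \<and> v \<in> V) = F"
    by (auto simp: compl_adj_def fun_eq_iff)
  moreover have "h 0 \<in> V" using hole_step[of 0] by (simp add: compl_adj_def)
  ultimately have "conn_component V F C" unfolding conn_component_def C_def by auto
  moreover have "A \<subseteq> C"
  proof
    fix a assume "a \<in> A"
    then obtain i where "a = h i" using hole_range by blast
    moreover have "F\<^sup>*\<^sup>* (h 0) (h i)"
      by (induction i) (auto intro: rtranclp.rtrancl_into_rtrancl hole_step[simplified])
    ultimately show "a \<in> C" unfolding C_def using compl_adj_def hole_step by fastforce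
  qed
  moreover have "triangle_free_on F C"
    unfolding triangle_free_on_def
  proof clarify
    fix x y z assume "x \<in> C" "F x y" "F y z" "F x z"
    then have "F\<^sup>*\<^sup>* x (h 0)"
      unfolding C_def using symp_rtranclp[of F] F_sym by (auto intro: sympI dest: sympD)
    then obtain n where "(F ^^ n) x (h 0)" using rtranclp_imp_relpowp by metis
    then show False
      using triangle_far_from_A[OF \<open>F x y\<close> \<open>F x z\<close> \<open>F y z\<close> hole_in_A] by blast
  qed
  ultimately show ?thesis by blast
qed

end

theorem lemma2:
  fixes V :: "'a set" and E :: "'a \<Rightarrow> 'a \<Rightarrow> bool" and A :: "'a set"
  assumes "simple_graph V E"
    and "\<not> contains_induced V E banner_V banner_adj"
    and "\<not> contains_induced V E {0..<5} (cycle_adj 5)"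
    and "odd_antihole V E A"
    and "stability_number V E \<ge> 3"
    and "\<forall>S. co_triangle V E S \<longrightarrow> card (S \<inter> A) < 2"
  shows "\<exists>C. conn_component V (compl_adj V E) C \<and> A \<subseteq> C \<and> triangle_free_on (compl_adj V E) C"
proof (rule odd_antihole_complement_hole[OF assms(4)])
  fix k :: nat and h :: "nat \<Rightarrow> 'a"
  assume "odd k" "range h = A" "\<And>i. compl_adj V E (h i) (h (i + 1))"
    "\<And>i. h (i + k) = h i" "\<And>i. \<not> compl_adj V E (h i) (h (i + 2))"
    "\<And>i. \<not> compl_adj V E (h i) (h (i + 3))"
  then interpret hole_in_complement V E A k h
    using assms(1-3,6) by unfold_locales
  show ?thesis by (fact component_of_A)
qed

end
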